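(* Let $G$ be a non-complete double-critical $k$-chromatic graph. For any vertex $x$ of $G$ that is not adjacent to all the other vertices of $G$, $\chi(G_x)\le k-3$.
   Context: All graphs are finite and simple. A graph $G$ is (vertex-)critical if $\chi(G-v)<\chi(G)$ for every vertex $v\in V(G)$. A critical graph $G$ is double-critical if $\chi(G-x-y)\le\chi(G)-2$ for every edge $xy\in E(G)$. For a vertex $x$, $G_x:=G[N(x)]$ denotes the subgraph induced by the neighbourhood of $x$. *)

theory Defs
  imports Main
begin

definition simple_graph :: "'a set \<Rightarrow> ('a \<Rightarrow> 'a \<Rightarrow> bool) \<Rightarrow> bool" where
  "simple_graph V E \<longleftrightarrow> finite V \<and>
     (\<forall>x y. E x y \<longrightarrow> x \<in> V \<and> y \<in> V \<and> x \<noteq> y \<and> E y x)"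

definition induced :: "('a \<Rightarrow> 'a \<Rightarrow> bool) \<Rightarrow> 'a set \<Rightarrow> ('a \<Rightarrow> 'a \<Rightarrow> bool)" where
  "induced E S = (\<lambda>x y. E x y \<and> x \<in> S \<and> y \<in> S)"

definition proper_colouring :: "'a set \<Rightarrow> ('a \<Rightarrow> 'a \<Rightarrow> bool) \<Rightarrow> nat \<Rightarrow> ('a \<Rightarrow> nat) \<Rightarrow> bool" where
  "proper_colouring V E k c \<longleftrightarrow> (\<forall>v\<in>V. c v < k) \<and> (\<forall>x\<in>V. \<forall>y\<in>V. E x y \<longrightarrow> c x \<noteq> c y)"

definition colourable :: "'a set \<Rightarrow> ('a \<Rightarrow> 'a \<Rightarrow> bool) \<Rightarrow> nat \<Rightarrow> bool" where
  "colourable V E k \<longleftrightarrow> (\<exists>c. proper_colouring V E k c)"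

definition chromatic_number :: "'a set \<Rightarrow> ('a \<Rightarrow> 'a \<Rightarrow> bool) \<Rightarrow> nat" where
  "chromatic_number V E = (LEAST k. colourable V E k)"

definition del_chi :: "'a set \<Rightarrow> ('a \<Rightarrow> 'a \<Rightarrow> bool) \<Rightarrow> 'a set \<Rightarrow> nat" where
  "del_chi V E S = chromatic_number (V - S) (induced E (V - S))"

definition vertex_critical :: "'a set \<Rightarrow> ('a \<Rightarrow> 'a \<Rightarrow> bool) \<Rightarrow> bool" where
  "vertex_critical V E \<longleftrightarrow>
     (\<forall>v\<in>V. del_chi V E {v} < chromatic_number V E)"

definition double_critical :: "'a set \<Rightarrow> ('a \<Rightarrow> 'a \<Rightarrow> bool) \<Rightarrow> bool" where
  "double_critical V E \<longleftrightarrow> vertex_critical V E \<and>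
     (\<forall>x y. E x y \<longrightarrow> int (del_chi V E {x, y}) \<le> int (chromatic_number V E) - 2)"

definition neighbourhood :: "('a \<Rightarrow> 'a \<Rightarrow> bool) \<Rightarrow> 'a \<Rightarrow> 'a set" where
  "neighbourhood E x = {y. E x y}"

definition complete_graph :: "'a set \<Rightarrow> ('a \<Rightarrow> 'a \<Rightarrow> bool) \<Rightarrow> bool" where
  "complete_graph V E \<longleftrightarrow> (\<forall>x\<in>V. \<forall>y\<in>V. x \<noteq> y \<longrightarrow> E x y)"

end

theory Submission
  imports Defs
begin

text \<open>Pick a vertex z not adjacent to x. If every neighbour of z were a neighbour of x, an
  optimal colouring of G - z could be extended by giving z the colour of x, contradicting
  criticality. So z has a neighbour w outside N(x). Double-criticality colours G - z - w
  with k - 2 colours; N(x) lies in G - z - w and avoids the colour of x, hence needs at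
  most k - 3 colours.\<close>

lemma colourable_finite:
  assumes "finite S" "\<And>a. a \<in> S \<Longrightarrow> \<not> E a a"
  shows "colourable S E (card S)"
proof -
  obtain f :: "'a \<Rightarrow> nat" where f: "bij_betw f S {0..<card S}"
    using assms(1) ex_bij_betw_finite_nat by blast
  have "f a \<noteq> f b" if "a \<in> S" "b \<in> S" "E a b" for a b
    using that assms(2) bij_betw_imp_inj_on[OF f] inj_on_eq_iff by metis
  moreover have "f v < card S" if "v \<in> S" for v
    using that bij_betwE[OF f] by auto
  ultimately have "proper_colouring S E (card S) f"
    unfolding proper_colouring_def by blast
  then show ?thesis unfolding colourable_def by blast
qed

lemma chromatic_number_colourable:
  assumes "finite S" "\<And>a. a \<in> S \<Longrightarrow> \<not> E a a"
  shows "colourable S E (chromatic_number S E)"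
  unfolding chromatic_number_def using colourable_finite[OF assms] by (rule LeastI)

lemma chromatic_number_le: "colourable S E m \<Longrightarrow> chromatic_number S E \<le> m"
  unfolding chromatic_number_def by (rule Least_le)

lemma simple_graph_sym: "simple_graph V E \<Longrightarrow> E a b \<Longrightarrow> E b a"
  unfolding simple_graph_def by blast

lemma simple_graph_edge_in: "simple_graph V E \<Longrightarrow> E a b \<Longrightarrow> a \<in> V \<and> b \<in> V \<and> a \<noteq> b"
  unfolding simple_graph_def by blast

lemma del_chi_colourable:
  assumes "simple_graph V E"
  shows "colourable (V - S) (induced E (V - S)) (del_chi V E S)"
  unfolding del_chi_def
proof (rule chromatic_number_colourable)
  show "finite (V - S)" using assms unfolding simple_graph_def by blast
  show "\<not> induced E (V - S) a a" for a
    using simple_graph_edge_in[OF assms] unfolding induced_def by blast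
qed

lemma colourable_neighbours_drop_colour:
  assumes c: "proper_colouring U (induced E U) d c"
    and x: "x \<in> U" and N: "N \<subseteq> U" and adj: "\<And>v. v \<in> N \<Longrightarrow> E x v"
  shows "colourable N (induced E N) (d - 1)"
proof -
  have c_lt: "\<And>v. v \<in> U \<Longrightarrow> c v < d"
    and c_ne: "\<And>a b. a \<in> U \<Longrightarrow> b \<in> U \<Longrightarrow> E a b \<Longrightarrow> c a \<noteq> c b"
    using c unfolding proper_colouring_def induced_def by auto
  have cN: "c v < d \<and> c v \<noteq> c x" if "v \<in> N" for v
  proof -
    have v: "v \<in> U" using that N by blast
    show ?thesis using c_lt[OF v] c_ne[OF x v adj[OF that]] by auto
  qed
  define c' where "c' v = (if c v < c x then c v else c v - 1)" for v
  have "proper_colouring N (induced E N) (d - 1) c'"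
    unfolding proper_colouring_def
  proof (intro conjI ballI impI)
    show "c' v < d - 1" if "v \<in> N" for v
      using cN[OF that] c_lt[OF x] unfolding c'_def by auto
    show "c' a \<noteq> c' b" if "a \<in> N" "b \<in> N" "induced E N a b" for a b
    proof -
      have "c a \<noteq> c b"
        using c_ne that N unfolding induced_def by blast
      then show ?thesis using cN[OF that(1)] cN[OF that(2)] unfolding c'_def by auto
    qed
  qed
  then show ?thesis unfolding colourable_def by blast
qed

lemma chromatic_neighbourhood_less_del_chi:
  assumes G: "simple_graph V E" and "x \<in> V - S" "neighbourhood E x \<inter> S = {}"
  shows "chromatic_number (neighbourhood E x) (induced E (neighbourhood E x)) < del_chi V E S"
proof -
  obtain c where c: "proper_colouring (V - S) (induced E (V - S)) (del_chi V E S) c"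
    using del_chi_colourable[OF G] unfolding colourable_def by blast
  have N: "neighbourhood E x \<subseteq> V - S"
    using assms(3) simple_graph_edge_in[OF G] unfolding neighbourhood_def by blast
  have "0 < del_chi V E S"
    using c \<open>x \<in> V - S\<close> unfolding proper_colouring_def by fastforce
  moreover have "colourable (neighbourhood E x) (induced E (neighbourhood E x)) (del_chi V E S - 1)"
    using colourable_neighbours_drop_colour[OF c \<open>x \<in> V - S\<close> N]
    unfolding neighbourhood_def by blast
  ultimately show ?thesis using chromatic_number_le by fastforce
qed

lemma vertex_critical_neighbourhood_not_subset:
  assumes G: "simple_graph V E" and "vertex_critical V E"
    and "x \<in> V" "z \<in> V" "z \<noteq> x" "\<not> E x z"
  shows "\<not> neighbourhood E z \<subseteq> neighbourhood E x"
proof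
  assume sub: "neighbourhood E z \<subseteq> neighbourhood E x"
  obtain c where c: "proper_colouring (V - {z}) (induced E (V - {z})) (del_chi V E {z}) c"
    using del_chi_colourable[OF G] unfolding colourable_def by blast
  define c' where "c' = c(z := c x)"
  have xz: "E a z \<Longrightarrow> E x a" for a
    using sub simple_graph_sym[OF G] unfolding neighbourhood_def by blast
  have "proper_colouring V E (del_chi V E {z}) c'"
    unfolding proper_colouring_def
  proof (intro conjI ballI impI)
    show "c' v < del_chi V E {z}" if "v \<in> V" for v
      using c that assms(3,5) unfolding proper_colouring_def c'_def by auto
    show "c' a \<noteq> c' b" if "a \<in> V" "b \<in> V" "E a b" for a b
    proof -
      have ab: "a \<noteq> b" "E b a"
        using that(3) simple_graph_edge_in[OF G] simple_graph_sym[OF G] by blast+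
      have cxv: "c x \<noteq> c v" if "v \<in> V - {z}" "E x v" for v
        using c that assms(3,5) unfolding proper_colouring_def induced_def by blast
      consider "a = z" | "b = z" | "a \<noteq> z" "b \<noteq> z" by blast
      then show ?thesis
      proof cases
        case 1
        with ab have "E x b" using xz by blast
        then show ?thesis using 1 cxv[of b] ab(1) that(2) unfolding c'_def by auto
      next
        case 2
        with that(3) have "E x a" using xz by blast
        then show ?thesis using 2 cxv[of a] ab(1) that(1) unfolding c'_def by auto
      next
        case 3
        then show ?thesis
          using c that unfolding proper_colouring_def induced_def c'_def by auto
      qed
    qed
  qed
  then have "chromatic_number V E \<le> del_chi V E {z}"
    using chromatic_number_le unfolding colourable_def by blast
  with assms(2,4) show False unfolding vertex_critical_def by fastforce
qed

theorem proposition13: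
  fixes V :: "'a set" and E :: "'a \<Rightarrow> 'a \<Rightarrow> bool" and k :: nat and x :: 'a
  assumes "simple_graph V E"
    and "\<not> complete_graph V E"
    and "double_critical V E"
    and "chromatic_number V E = k"
    and "x \<in> V"
    and "\<exists>y\<in>V. y \<noteq> x \<and> \<not> E x y"
  shows "int (chromatic_number (neighbourhood E x) (induced E (neighbourhood E x))) \<le> int k - 3"
proof -
  note G = assms(1)
  obtain z where z: "z \<in> V" "z \<noteq> x" "\<not> E x z" using assms(6) by blast
  obtain w where w: "E z w" "\<not> E x w"
    using vertex_critical_neighbourhood_not_subset[OF G _ assms(5) z] assms(3)
    unfolding double_critical_def neighbourhood_def by blast
  have "x \<in> V - {z, w}" using assms(5) z w simple_graph_sym[OF G] by blast
  moreover have "neighbourhood E x \<inter> {z, w} = {}"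
    using z w unfolding neighbourhood_def by blast
  ultimately have "chromatic_number (neighbourhood E x) (induced E (neighbourhood E x))
      < del_chi V E {z, w}"
    by (rule chromatic_neighbourhood_less_del_chi[OF G])
  moreover have "int (del_chi V E {z, w}) \<le> int k - 2"
    using assms(3,4) w(1) unfolding double_critical_def by blast
  ultimately show ?thesis by linarith
qed

end
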